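(* Let $\phi$ be a topological flow on a compact metric space $(M,\mathrm{dist})$, let $K\subset M\setminus\mathrm{Sing}(\phi)$ be compact, let $T_0\in(0,1)$ satisfy $\phi(t,x)\neq x$ for all $t\in(0,2T_0]$ and $x\in K$, and let $\tilde K=\bigcap_{t\in[-2T_0,2T_0]}\phi(t,K)$. Then for every $\varepsilon>0$ there exists $\varepsilon_1>0$ with the following property: if $\xi\in\mathcal{P}$, $t_0\in\mathbb{R}$, $T_1\ge T_0$, $g\in\mathrm{Rep}$ with $g(0)=0$, and $y\in M$ satisfy $\mathrm{dist}(\xi(t+t_0),\phi(g(t),y))<\varepsilon_1$ and $\xi(t+t_0),\ \phi(g(t),y)\in\tilde K$ for all $t\in[0,T_1]$, then there exists $\tilde g\in\mathrm{Rep}(\varepsilon)$ with $\tilde g(0)=g(0)$ and $\tilde g(T_1)=g(T_1)$ such that $\mathrm{dist}(\xi(t+t_0),\phi(\tilde g(t),y))<\varepsilon$ for all $t\in[0,T_1]$.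
   Context: A topological flow is a continuous $\phi:\mathbb{R}\times M\to M$ with $\phi(0,x)=x$, $\phi(s+t,x)=\phi(s,\phi(t,x))$; $\mathrm{Sing}(\phi)$ is its set of fixed points. $\mathcal{P}$ denotes the set of all functions $\xi:\mathbb{R}\to M$ with $\xi(t+nT_0)=\phi(t,\xi(nT_0))$ for all $t\in[0,T_0)$ and $n\in\mathbb{Z}$. $\mathrm{Rep}$ is the set of orientation-preserving homeomorphisms of $\mathbb{R}$, and $\mathrm{Rep}(\varepsilon)=\{f\in\mathrm{Rep}: |\frac{f(a)-f(b)}{a-b}-1|<\varepsilon\ \forall a>b\}$. *)

theory Defs
  imports "HOL-Analysis.Analysis"
begin

definition topological_flow :: "(real \<Rightarrow> 'a::topological_space \<Rightarrow> 'a) \<Rightarrow> bool" where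
  "topological_flow \<phi> \<longleftrightarrow>
     continuous_on UNIV (\<lambda>(t, x). \<phi> t x) \<and>
     (\<forall>x. \<phi> 0 x = x) \<and>
     (\<forall>s t x. \<phi> (s + t) x = \<phi> s (\<phi> t x))"

definition Sing :: "(real \<Rightarrow> 'a \<Rightarrow> 'a) \<Rightarrow> 'a set" where
  "Sing \<phi> = {x. \<forall>t. \<phi> t x = x}"

definition Pset :: "(real \<Rightarrow> 'a \<Rightarrow> 'a) \<Rightarrow> real \<Rightarrow> (real \<Rightarrow> 'a) set" where
  "Pset \<phi> T0 = {\<xi>. \<forall>n::int. \<forall>t\<in>{0..<T0}.
        \<xi> (t + of_int n * T0) = \<phi> t (\<xi> (of_int n * T0))}"

definition Rep :: "(real \<Rightarrow> real) set" where
  "Rep = {f. (\<exists>g. homeomorphism UNIV UNIV f g) \<and> strict_mono f}"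

definition Rep_eps :: "real \<Rightarrow> (real \<Rightarrow> real) set" where
  "Rep_eps \<epsilon> = {f \<in> Rep. \<forall>a b. a > b \<longrightarrow> \<bar>(f a - f b) / (a - b) - 1\<bar> < \<epsilon>}"

end

theory Submission
  imports Defs
begin

text \<open>By compactness and the absence of periods in \<open>(0, 2 T\<^sub>0]\<close>, points of \<open>K\<close> are moved a
  definite distance by the flow in any time between \<open>\<delta>\<close> and \<open>2 T\<^sub>0\<close>. Hence if \<open>x, z\<close> are close
  points whose forward orbits up to time \<open>2 T\<^sub>0\<close> stay in \<open>K\<close>, and \<open>\<phi>(a, x), \<phi>(b, z)\<close> with
  \<open>a, b \<le> 2 T\<^sub>0\<close> are still close, then \<open>|a - b| < \<delta>\<close>. Along one period of the pseudo-orbit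
  \<open>\<xi>\<close> this and the continuity of \<open>g\<close> keep the drift \<open>h(t) = g(t) - t\<close> within \<open>2\<delta>\<close> on every
  window of length \<open>T\<^sub>0\<close>; chaining windows gives \<open>|h(t) - h(s)| \<le> 2\<delta> + (2\<delta>/T\<^sub>0)|t - s|\<close>.
  An inf-convolution replaces \<open>h\<close> by a \<open>4\<delta>/T\<^sub>0\<close>-Lipschitz function with the same values at
  \<open>0\<close> and \<open>T\<^sub>1\<close> and within \<open>2\<delta>\<close> of \<open>h\<close>, so \<open>t \<mapsto> t + h(t)\<close> lies in \<open>Rep(\<epsilon>)\<close>, and uniform
  continuity of the flow in time absorbs the remaining \<open>2\<delta>\<close> error.\<close>

lemma topological_flow_add: "topological_flow \<phi> \<Longrightarrow> \<phi> (s + t) x = \<phi> s (\<phi> t x)"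
  by (simp add: topological_flow_def)

lemma flow_uniformly_continuous_on_Times:
  fixes \<phi> :: "real \<Rightarrow> 'a::metric_space \<Rightarrow> 'a"
  assumes "topological_flow \<phi>" "compact (UNIV :: 'a set)" "compact I"
  shows "uniformly_continuous_on (I \<times> UNIV) (\<lambda>(t, x). \<phi> t x)"
  using assms unfolding topological_flow_def
  by (intro compact_uniformly_continuous compact_Times) (auto intro: continuous_on_subset)

lemma flow_equicontinuous:
  fixes \<phi> :: "real \<Rightarrow> 'a::metric_space \<Rightarrow> 'a"
  assumes "topological_flow \<phi>" "compact (UNIV :: 'a set)" "compact I" "e > 0"
  shows "\<exists>d>0. \<forall>t\<in>I. \<forall>x z. dist x z < d \<longrightarrow> dist (\<phi> t x) (\<phi> t z) < e"
proof -
  obtain d where "d > 0" and d: "\<And>p p'. p \<in> I \<times> UNIV \<Longrightarrow> p' \<in> I \<times> UNIV \<Longrightarrow>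
      dist p' p < d \<Longrightarrow> dist ((\<lambda>(t, x). \<phi> t x) p') ((\<lambda>(t, x). \<phi> t x) p) < e"
    using flow_uniformly_continuous_on_Times[OF assms(1-3)] assms(4)
    unfolding uniformly_continuous_on_def by metis
  have "dist (\<phi> t x) (\<phi> t z) < e" if "t \<in> I" "dist x z < d" for t x z
    using d[of "(t, z)" "(t, x)"] that by (auto simp: dist_Pair_Pair)
  with \<open>d > 0\<close> show ?thesis by blast
qed

lemma flow_uniformly_continuous_in_time:
  fixes \<phi> :: "real \<Rightarrow> 'a::metric_space \<Rightarrow> 'a"
  assumes fl: "topological_flow \<phi>" and "compact (UNIV :: 'a set)" "e > 0"
  shows "\<exists>d>0. \<forall>s t x. \<bar>s - t\<bar> < d \<longrightarrow> dist (\<phi> s x) (\<phi> t x) < e"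
proof -
  obtain d where "d > 0" and d: "\<And>p p'. p \<in> {-1..1} \<times> UNIV \<Longrightarrow> p' \<in> {-1..1} \<times> UNIV \<Longrightarrow>
      dist p' p < d \<Longrightarrow> dist ((\<lambda>(t, x). \<phi> t x) p') ((\<lambda>(t, x). \<phi> t x) p) < e"
    using flow_uniformly_continuous_on_Times[OF fl assms(2), of "{-1..1}"] assms(3)
    unfolding uniformly_continuous_on_def by (metis compact_Icc)
  have "dist (\<phi> s x) (\<phi> t x) < e" if "\<bar>s - t\<bar> < min d 1" for s t x
  proof -
    have "\<phi> s x = \<phi> (s - t) (\<phi> t x)" "\<phi> 0 (\<phi> t x) = \<phi> t x"
      using topological_flow_add[OF fl, of "s - t" t x] fl by (auto simp: topological_flow_def)
    then show ?thesis
      using d[of "(0, \<phi> t x)" "(s - t, \<phi> t x)"] that by (auto simp: dist_Pair_Pair dist_real_def abs_less_iff)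
  qed
  with \<open>d > 0\<close> show ?thesis by (intro exI[of _ "min d 1"]) auto
qed

lemma flow_displacement_bounded_below:
  fixes \<phi> :: "real \<Rightarrow> 'a::metric_space \<Rightarrow> 'a"
  assumes fl: "topological_flow \<phi>" and "compact K" and "0 < \<delta>"
    and no_fix: "\<forall>t\<in>{0<..T}. \<forall>x\<in>K. \<phi> t x \<noteq> x"
  shows "\<exists>\<eta>>0. \<forall>t\<in>{\<delta>..T}. \<forall>x\<in>K. \<eta> \<le> dist (\<phi> t x) x"
proof (cases "{\<delta>..T} \<times> K = {}")
  case True
  then show ?thesis by (auto intro: exI[of _ 1])
next
  case False
  have "continuous_on ({\<delta>..T} \<times> K) (\<lambda>(t, x). \<phi> t x)"
    using fl continuous_on_subset unfolding topological_flow_def by blast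
  then have "continuous_on ({\<delta>..T} \<times> K) (\<lambda>p. \<phi> (fst p) (snd p))"
    by (simp add: case_prod_beta')
  then have "continuous_on ({\<delta>..T} \<times> K) (\<lambda>p. dist (\<phi> (fst p) (snd p)) (snd p))"
    by (intro continuous_intros)
  then obtain p where p: "p \<in> {\<delta>..T} \<times> K"
    "\<forall>q\<in>{\<delta>..T} \<times> K. dist (\<phi> (fst p) (snd p)) (snd p) \<le> dist (\<phi> (fst q) (snd q)) (snd q)"
    using continuous_attains_inf[OF compact_Times[OF compact_Icc \<open>compact K\<close>] False] by blast
  have "dist (\<phi> (fst p) (snd p)) (snd p) > 0"
    using p(1) no_fix \<open>0 < \<delta>\<close> by (auto simp: mem_Times_iff)
  with p(2) show ?thesis by (intro exI[of _ "dist (\<phi> (fst p) (snd p)) (snd p)"]) force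
qed

lemma flow_mem_of_mem_Inter_image:
  assumes "topological_flow \<phi>" "x \<in> (\<Inter>s\<in>S. \<phi> s ` K)" "-c \<in> S"
  shows "\<phi> c x \<in> K"
proof -
  obtain k where "k \<in> K" "x = \<phi> (-c) k" using assms(2,3) by blast
  with assms(1) show ?thesis by (metis add.right_inverse topological_flow_def)
qed

definition time_rigid ::
    "(real \<Rightarrow> 'a::metric_space \<Rightarrow> 'a) \<Rightarrow> 'a set \<Rightarrow> real \<Rightarrow> real \<Rightarrow> real \<Rightarrow> bool" where
  "time_rigid \<phi> C T \<delta> r \<longleftrightarrow>
     (\<forall>x\<in>C. \<forall>z\<in>C. \<forall>a\<in>{0..T}. \<forall>b\<in>{0..T}.
        dist x z < r \<longrightarrow> dist (\<phi> a x) (\<phi> b z) < r \<longrightarrow> \<bar>a - b\<bar> < \<delta>)"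

lemma time_rigid_antimono: "time_rigid \<phi> C T \<delta> r \<Longrightarrow> r' \<le> r \<Longrightarrow> time_rigid \<phi> C T \<delta> r'"
  unfolding time_rigid_def by force

lemma time_rigid_exists:
  fixes \<phi> :: "real \<Rightarrow> 'a::metric_space \<Rightarrow> 'a"
  assumes fl: "topological_flow \<phi>" and "compact (UNIV :: 'a set)" "compact K" "0 < \<delta>"
    and no_fix: "\<forall>t\<in>{0<..T}. \<forall>x\<in>K. \<phi> t x \<noteq> x"
    and C: "\<And>x c. x \<in> C \<Longrightarrow> c \<in> {0..T} \<Longrightarrow> \<phi> c x \<in> K"
  shows "\<exists>r>0. time_rigid \<phi> C T \<delta> r"
proof -
  obtain \<eta> where "\<eta> > 0" and \<eta>: "\<forall>t\<in>{\<delta>..T}. \<forall>x\<in>K. \<eta> \<le> dist (\<phi> t x) x"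
    using flow_displacement_bounded_below[OF fl \<open>compact K\<close> \<open>0 < \<delta>\<close> no_fix] by blast
  obtain \<rho> where "\<rho> > 0" and \<rho>: "\<forall>t\<in>{0..T}. \<forall>x z. dist x z < \<rho> \<longrightarrow> dist (\<phi> t x) (\<phi> t z) < \<eta>/2"
    using flow_equicontinuous[OF fl assms(2) compact_Icc, of "\<eta>/2" 0 T] \<open>\<eta> > 0\<close> by auto
  have "time_rigid \<phi> C T \<delta> (min \<rho> (\<eta>/2))"
    unfolding time_rigid_def
  proof (intro ballI impI)
    fix x z a b assume x: "x \<in> C" and "z \<in> C" and a: "a \<in> {0..T}" and b: "b \<in> {0..T}"
      and "dist x z < min \<rho> (\<eta>/2)" "dist (\<phi> a x) (\<phi> b z) < min \<rho> (\<eta>/2)"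
    moreover have "dist (\<phi> b x) (\<phi> b z) < \<eta>/2"
      using \<rho> b \<open>dist x z < min \<rho> (\<eta>/2)\<close> by auto
    ultimately have near: "dist (\<phi> a x) (\<phi> b x) < \<eta>"
      using dist_triangle[of "\<phi> a x" "\<phi> b x" "\<phi> b z"] by (simp add: dist_commute)
    have far: "\<eta> \<le> dist (\<phi> v x) (\<phi> u x)"
      if "u \<in> {0..T}" "v \<in> {0..T}" "\<delta> \<le> v - u" for u v
    proof -
      have "\<phi> v x = \<phi> (v - u) (\<phi> u x)" using topological_flow_add[OF fl, of "v - u" u x] by simp
      then show ?thesis using \<eta> C[OF x \<open>u \<in> {0..T}\<close>] that by auto
    qed
    show "\<bar>a - b\<bar> < \<delta>"
      using near far[OF a b] far[OF b a] by (force simp: dist_commute abs_if)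
  qed
  with \<open>\<rho> > 0\<close> \<open>\<eta> > 0\<close> show ?thesis by (intro exI[of _ "min \<rho> (\<eta>/2)"]) auto
qed

lemma Pset_flow_within_period:
  assumes fl: "topological_flow \<phi>" and "\<xi> \<in> Pset \<phi> T0"
    and n: "of_int n * T0 \<le> s" "s \<le> u" "u < of_int n * T0 + T0"
  shows "\<xi> u = \<phi> (u - s) (\<xi> s)"
proof -
  let ?x = "\<xi> (of_int n * T0)"
  have period: "\<xi> t = \<phi> (t - of_int n * T0) ?x"
    if "of_int n * T0 \<le> t" "t < of_int n * T0 + T0" for t
  proof -
    have "t - of_int n * T0 \<in> {0..<T0}" using that by auto
    with \<open>\<xi> \<in> Pset \<phi> T0\<close>
    have "\<xi> ((t - of_int n * T0) + of_int n * T0) = \<phi> (t - of_int n * T0) ?x"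
      unfolding Pset_def by blast
    then show ?thesis by simp
  qed
  have "\<xi> u = \<phi> ((u - s) + (s - of_int n * T0)) ?x" using period[of u] n by simp
  also have "\<dots> = \<phi> (u - s) (\<phi> (s - of_int n * T0) ?x)"
    using fl by (simp only: topological_flow_def)
  also have "\<phi> (s - of_int n * T0) ?x = \<xi> s" using period[of s] n by simp
  finally show ?thesis .
qed

lemma chained_increment_bound:
  fixes h :: "real \<Rightarrow> real"
  assumes loc: "\<And>s t. 0 \<le> s \<Longrightarrow> s \<le> t \<Longrightarrow> t \<le> T1 \<Longrightarrow> t - s \<le> W \<Longrightarrow> \<bar>h t - h s\<bar> \<le> D"
    and "0 < W" "0 \<le> D" and st: "s \<in> {0..T1}" "t \<in> {0..T1}"
  shows "\<bar>h t - h s\<bar> \<le> D + D / W * \<bar>t - s\<bar>"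
proof -
  have steps: "\<bar>h t - h s\<bar> \<le> D + D / W * (t - s)"
    if "0 \<le> s" "s \<le> t" "t \<le> T1" "t - s \<le> real n * W" for n :: nat and s t
    using that
  proof (induction n arbitrary: s)
    case 0
    then show ?case using \<open>0 \<le> D\<close> by auto
  next
    case (Suc n)
    have "0 \<le> D / W * (t - s)" using Suc.prems \<open>0 \<le> D\<close> \<open>0 < W\<close> by simp
    show ?case
    proof (cases "t - s \<le> W")
      case True
      with loc[of s t] Suc.prems \<open>0 \<le> D / W * (t - s)\<close> show ?thesis by linarith
    next
      case False
      have "\<bar>h (s + W) - h s\<bar> \<le> D" using loc[of s "s + W"] Suc.prems False \<open>0 < W\<close> by auto
      moreover have "\<bar>h t - h (s + W)\<bar> \<le> D + D / W * (t - (s + W))"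
        using Suc.IH[of "s + W"] Suc.prems False \<open>0 < W\<close> by (auto simp: algebra_simps)
      moreover have "D / W * (t - (s + W)) + D = D / W * (t - s)"
        using \<open>0 < W\<close> by (simp add: field_simps)
      ultimately show ?thesis by linarith
    qed
  qed
  have ordered: "\<bar>h t - h s\<bar> \<le> D + D / W * \<bar>t - s\<bar>"
    if "s \<in> {0..T1}" "t \<in> {0..T1}" "s \<le> t" for s t
  proof -
    have "(t - s) / W \<le> real (nat \<lceil>(t - s) / W\<rceil>)" by (rule real_nat_ceiling_ge)
    then have "t - s \<le> real (nat \<lceil>(t - s) / W\<rceil>) * W" using \<open>0 < W\<close> by (simp add: divide_le_eq)
    then show ?thesis using steps that by auto
  qed
  show ?thesis
    using ordered[OF st] ordered[OF st(2,1)] by (cases "s \<le> t") (auto simp: abs_minus_commute)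
qed

lemma lipschitz_minorant_inf_convolution:
  fixes h :: "real \<Rightarrow> real"
  assumes bnd: "\<And>s t. s \<in> {0..T1} \<Longrightarrow> t \<in> {0..T1} \<Longrightarrow> \<bar>h t - h s\<bar> \<le> D + L * \<bar>t - s\<bar>"
    and "0 \<le> L" "0 \<le> T1"
  shows "\<exists>q. (\<forall>t\<in>{0..T1}. h t - D \<le> q t \<and> q t \<le> h t) \<and>
             (\<forall>a\<in>{0..T1}. \<forall>b\<in>{0..T1}. \<bar>q a - q b\<bar> \<le> L * \<bar>a - b\<bar>)"
proof -
  define S where "S t = (\<lambda>s. h s + L * \<bar>t - s\<bar>) ` {0..T1}" for t
  define q where "q t = Inf (S t)" for t
  have ne: "S t \<noteq> {}" for t using \<open>0 \<le> T1\<close> by (auto simp: S_def)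
  have low: "h t - D \<le> x" if "t \<in> {0..T1}" "x \<in> S t" for t x
    using that bnd[of _ t] by (force simp: S_def)
  then have bdd: "bdd_below (S t)" if "t \<in> {0..T1}" for t
    using that by (auto simp: bdd_below_def)
  have "q t \<le> h t" if "t \<in> {0..T1}" for t
    using cInf_lower[OF _ bdd[OF that], of "h t"] that by (force simp: q_def S_def)
  moreover have "h t - D \<le> q t" if "t \<in> {0..T1}" for t
    unfolding q_def using low[OF that] by (intro cInf_greatest[OF ne]) auto
  moreover have one_sided: "q t - L * \<bar>t - t'\<bar> \<le> q t'" if "t \<in> {0..T1}" "t' \<in> {0..T1}" for t t'
    unfolding q_def
  proof (rule cInf_greatest[OF ne])
    fix x assume "x \<in> S t'"
    then obtain s where s: "s \<in> {0..T1}" "x = h s + L * \<bar>t' - s\<bar>" by (auto simp: S_def)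
    have "Inf (S t) \<le> h s + L * \<bar>t - s\<bar>"
      using cInf_lower[OF _ bdd[OF that(1)]] s(1) by (auto simp: S_def)
    moreover have "L * \<bar>t - s\<bar> \<le> L * \<bar>t' - s\<bar> + L * \<bar>t - t'\<bar>"
      using \<open>0 \<le> L\<close> by (simp add: distrib_left[symmetric] mult_left_mono)
    ultimately show "Inf (S t) - L * \<bar>t - t'\<bar> \<le> x" using s(2) by linarith
  qed
  moreover have "\<bar>q a - q b\<bar> \<le> L * \<bar>a - b\<bar>" if "a \<in> {0..T1}" "b \<in> {0..T1}" for a b
    using one_sided[OF that] one_sided[OF that(2,1)] by (auto simp: abs_le_iff abs_minus_commute)
  ultimately show ?thesis by blast
qed

lemma lipschitz_regularization:
  fixes h :: "real \<Rightarrow> real"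
  assumes bnd: "\<And>s t. s \<in> {0..T1} \<Longrightarrow> t \<in> {0..T1} \<Longrightarrow> \<bar>h t - h s\<bar> \<le> D + L * \<bar>t - s\<bar>"
    and L: "0 \<le> L" and D: "0 \<le> D" and W: "0 < W" "W \<le> T1"
  shows "\<exists>H. (\<forall>a b. \<bar>H a - H b\<bar> \<le> (L + D / W) * \<bar>a - b\<bar>) \<and> H 0 = h 0 \<and> H T1 = h T1 \<and>
             (\<forall>t\<in>{0..T1}. \<bar>H t - h t\<bar> \<le> D)"
proof -
  have "0 \<le> T1" using W by simp
  then obtain q where q: "\<And>t. t \<in> {0..T1} \<Longrightarrow> h t - D \<le> q t \<and> q t \<le> h t"
    and q_lip: "\<And>a b. a \<in> {0..T1} \<Longrightarrow> b \<in> {0..T1} \<Longrightarrow> \<bar>q a - q b\<bar> \<le> L * \<bar>a - b\<bar>"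
    using lipschitz_minorant_inf_convolution[OF bnd L] by metis
  define \<alpha> where "\<alpha> = h 0 - q 0"
  define \<beta> where "\<beta> = h T1 - q T1"
  have \<alpha>\<beta>: "0 \<le> \<alpha>" "\<alpha> \<le> D" "0 \<le> \<beta>" "\<beta> \<le> D"
    using q[of 0] q[of T1] W by (auto simp: \<alpha>_def \<beta>_def)
  txt \<open>Add back the endpoint defects linearly, then extend by constants outside \<open>[0, T1]\<close>.\<close>
  define h' where "h' t = q t + \<alpha> * (1 - t / T1) + \<beta> * (t / T1)" for t
  define c where "c t = max 0 (min T1 t)" for t
  define H where "H t = h' (c t)" for t
  have c: "c t \<in> {0..T1}" "\<bar>c a - c b\<bar> \<le> \<bar>a - b\<bar>" for t a b
    using W by (auto simp: c_def)
  have h'_lip: "\<bar>h' a - h' b\<bar> \<le> (L + D / W) * \<bar>a - b\<bar>" if "a \<in> {0..T1}" "b \<in> {0..T1}" for a b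
  proof -
    have "h' a - h' b = (q a - q b) + (\<beta> - \<alpha>) * (a - b) / T1"
      using W by (simp add: h'_def field_simps)
    moreover have "\<bar>(\<beta> - \<alpha>) * (a - b) / T1\<bar> \<le> D / W * \<bar>a - b\<bar>"
    proof -
      have "\<bar>(\<beta> - \<alpha>) * (a - b) / T1\<bar> = \<bar>\<beta> - \<alpha>\<bar> * \<bar>a - b\<bar> / T1"
        using W by (simp add: abs_mult)
      also have "\<dots> \<le> D * \<bar>a - b\<bar> / T1"
        using \<alpha>\<beta> W by (intro divide_right_mono mult_right_mono) auto
      also have "\<dots> \<le> D * \<bar>a - b\<bar> / W"
        using W D by (intro divide_left_mono) auto
      finally show ?thesis by simp
    qed
    ultimately have "\<bar>h' a - h' b\<bar> \<le> L * \<bar>a - b\<bar> + D / W * \<bar>a - b\<bar>"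
      using q_lip[OF that] abs_triangle_ineq[of "q a - q b" "(\<beta> - \<alpha>) * (a - b) / T1"] by linarith
    then show ?thesis by (simp add: distrib_right)
  qed
  have "\<bar>H a - H b\<bar> \<le> (L + D / W) * \<bar>a - b\<bar>" for a b
  proof -
    have "\<bar>H a - H b\<bar> \<le> (L + D / W) * \<bar>c a - c b\<bar>"
      unfolding H_def by (rule h'_lip[OF c(1) c(1)])
    also have "\<dots> \<le> (L + D / W) * \<bar>a - b\<bar>"
      using c(2) L D W by (intro mult_left_mono) auto
    finally show ?thesis .
  qed
  moreover have "\<bar>H t - h t\<bar> \<le> D" if "t \<in> {0..T1}" for t
  proof -
    have "0 \<le> \<alpha> * (1 - t / T1) + \<beta> * (t / T1)"
      using \<alpha>\<beta> that W by (intro add_nonneg_nonneg mult_nonneg_nonneg) auto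
    moreover have "\<alpha> * (1 - t / T1) + \<beta> * (t / T1) \<le> D * (1 - t / T1) + D * (t / T1)"
      using \<alpha>\<beta> that W by (intro add_mono mult_right_mono) auto
    moreover have "D * (1 - t / T1) + D * (t / T1) = D" by (simp add: algebra_simps)
    moreover have "H t = q t + (\<alpha> * (1 - t / T1) + \<beta> * (t / T1))"
      using that by (simp add: H_def c_def h'_def)
    ultimately show ?thesis using q[OF that] by (simp add: abs_le_iff)
  qed
  moreover have "H 0 = h 0" "H T1 = h T1"
    using W by (simp_all add: H_def c_def h'_def \<alpha>_def \<beta>_def)
  ultimately show ?thesis by blast
qed

lemma Rep_continuous_mono:
  assumes "f \<in> Rep"
  shows "continuous_on UNIV f" "mono f"
  using assms by (auto simp: Rep_def homeomorphism_def strict_mono_mono)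

lemma expanding_continuous_in_Rep:
  fixes f :: "real \<Rightarrow> real"
  assumes cont: "continuous_on UNIV f" and "0 < c"
    and expand: "\<And>a b. b \<le> a \<Longrightarrow> c * (a - b) \<le> f a - f b"
  shows "f \<in> Rep"
proof -
  have sm: "strict_mono f"
    unfolding strict_mono_def using expand \<open>0 < c\<close>
    by (metis diff_gt_0_iff_gt less_eq_real_def mult_pos_pos order_less_le_trans)
  then have inj: "inj f" by (rule strict_mono_imp_inj_on)
  have surj: "surj f"
  proof (rule surjI)
    fix y :: real
    define b where "b = (\<bar>y\<bar> + \<bar>f 0\<bar>) / c"
    have "0 \<le> b" "c * b = \<bar>y\<bar> + \<bar>f 0\<bar>" using \<open>0 < c\<close> by (simp_all add: b_def)
    moreover have "f 0 + c * b \<le> f b" "f (-b) \<le> f 0 - c * b"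
      using expand[of 0 b] expand[of "-b" 0] \<open>0 \<le> b\<close> by auto
    ultimately have "f (-b) \<le> y" "y \<le> f b" "-b \<le> b" by auto
    then show "f (SOME x. f x = y) = y"
      using IVT'[of f "-b" y b] continuous_on_subset[OF cont] by (metis (mono_tags) someI subset_UNIV)
  qed
  have "lipschitz_on (1 / c) UNIV (inv f)"
    unfolding lipschitz_on_def
  proof (intro conjI ballI)
    show "0 \<le> 1 / c" using \<open>0 < c\<close> by simp
    fix x y :: real
    obtain a b where ab: "f a = x" "f b = y" using surj by (metis surjD)
    have "c * \<bar>a - b\<bar> \<le> \<bar>f a - f b\<bar>"
      using expand[of a b] expand[of b a] by (cases "b \<le> a") (auto simp: abs_if algebra_simps)
    then show "dist (inv f x) (inv f y) \<le> 1 / c * dist x y"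
      using ab inv_f_f[OF inj] \<open>0 < c\<close> by (auto simp: dist_real_def field_simps)
  qed
  then have "continuous_on UNIV (inv f)" by (rule lipschitz_on_continuous_on)
  then have "homeomorphism UNIV UNIV f (inv f)"
    using cont surj inj by (auto simp: homeomorphism_def surj_f_inv_f) (metis UNIV_I image_eqI inv_f_f)
  with sm show ?thesis by (auto simp: Rep_def)
qed

lemma lipschitz_perturbation_of_id_in_Rep_eps:
  fixes H :: "real \<Rightarrow> real"
  assumes lip: "\<And>a b. \<bar>H a - H b\<bar> \<le> L * \<bar>a - b\<bar>" and L: "0 \<le> L" "L < \<epsilon>" "L < 1"
  shows "(\<lambda>t. t + H t) \<in> Rep_eps \<epsilon>"
proof -
  have "lipschitz_on L UNIV H"
    unfolding lipschitz_on_def using lip L by (auto simp: dist_real_def)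
  then have "continuous_on UNIV (\<lambda>t. t + H t)"
    by (intro continuous_intros lipschitz_on_continuous_on)
  moreover have "(1 - L) * (a - b) \<le> (a + H a) - (b + H b)" if "b \<le> a" for a b
    using lip[of a b] that by (auto simp: algebra_simps abs_le_iff)
  ultimately have "(\<lambda>t. t + H t) \<in> Rep"
    using L by (intro expanding_continuous_in_Rep[where c = "1 - L"]) auto
  moreover have "\<bar>((a + H a) - (b + H b)) / (a - b) - 1\<bar> < \<epsilon>" if "b < a" for a b
  proof -
    have "((a + H a) - (b + H b)) / (a - b) - 1 = (H a - H b) / (a - b)"
      using that by (simp add: field_simps)
    also have "\<bar>\<dots>\<bar> \<le> L" using lip[of a b] that by (simp add: abs_divide divide_le_eq)
    finally show ?thesis using L by simp
  qed
  ultimately show ?thesis by (auto simp: Rep_eps_def)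
qed

lemma Rep_eps_approximation:
  fixes g :: "real \<Rightarrow> real"
  assumes drift: "\<And>s t. 0 \<le> s \<Longrightarrow> s \<le> t \<Longrightarrow> t \<le> T1 \<Longrightarrow> t - s \<le> W \<Longrightarrow>
      \<bar>(g t - t) - (g s - s)\<bar> \<le> D"
    and "0 < W" "W \<le> T1" "0 \<le> D" "2 * D < \<epsilon> * W" "2 * D < W"
  shows "\<exists>g'\<in>Rep_eps \<epsilon>. g' 0 = g 0 \<and> g' T1 = g T1 \<and> (\<forall>t\<in>{0..T1}. \<bar>g' t - g t\<bar> \<le> D)"
proof -
  define h where "h t = g t - t" for t
  have bnd: "\<bar>h t - h s\<bar> \<le> D + D / W * \<bar>t - s\<bar>" if "s \<in> {0..T1}" "t \<in> {0..T1}" for s t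
    using chained_increment_bound[of T1 W h D s t] drift that assms(2,4) by (auto simp: h_def)
  have "\<exists>H. (\<forall>a b. \<bar>H a - H b\<bar> \<le> (D / W + D / W) * \<bar>a - b\<bar>) \<and> H 0 = h 0 \<and> H T1 = h T1 \<and>
      (\<forall>t\<in>{0..T1}. \<bar>H t - h t\<bar> \<le> D)"
    by (rule lipschitz_regularization[OF bnd]) (use assms(2-4) in auto)
  then obtain H where H: "\<And>a b. \<bar>H a - H b\<bar> \<le> (D / W + D / W) * \<bar>a - b\<bar>"
    "H 0 = h 0" "H T1 = h T1" "\<And>t. t \<in> {0..T1} \<Longrightarrow> \<bar>H t - h t\<bar> \<le> D"
    by blast
  have "D / W + D / W < \<epsilon>" "D / W + D / W < 1"
    using assms(2,5,6) by (simp_all add: field_simps)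
  then have "(\<lambda>t. t + H t) \<in> Rep_eps \<epsilon>"
    using assms(2,4) by (intro lipschitz_perturbation_of_id_in_Rep_eps[OF H(1)]) auto
  moreover have "\<bar>(t + H t) - g t\<bar> \<le> D" if "t \<in> {0..T1}" for t
    using H(4)[OF that] by (simp add: h_def algebra_simps)
  ultimately show ?thesis using H(2,3) by (intro bexI[of _ "\<lambda>t. t + H t"]) (auto simp: h_def)
qed

context
  fixes \<phi> :: "real \<Rightarrow> 'a::metric_space \<Rightarrow> 'a" and \<xi> :: "real \<Rightarrow> 'a" and g :: "real \<Rightarrow> real"
    and C :: "'a set" and y :: 'a and T0 T1 t0 \<delta> r :: real
  assumes fl: "topological_flow \<phi>" and xi: "\<xi> \<in> Pset \<phi> T0" and "0 < T0"
    and g: "g \<in> Rep"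
    and close: "\<And>t. t \<in> {0..T1} \<Longrightarrow> dist (\<xi> (t + t0)) (\<phi> (g t) y) < r"
    and in_C: "\<And>t. t \<in> {0..T1} \<Longrightarrow> \<xi> (t + t0) \<in> C \<and> \<phi> (g t) y \<in> C"
    and rigid: "time_rigid \<phi> C (2 * T0) \<delta> r"
    and "0 < \<delta>"
begin

text \<open>The drift \<open>F\<close> vanishes at \<open>s\<close>, is continuous, and by time rigidity never takes the values
  \<open>\<plusminus>\<delta>\<close> inside one period of the pseudo-orbit.\<close>
lemma drift_within_period:
  assumes "\<delta> \<le> T0" "0 \<le> s" "s \<le> u" "u \<le> T1"
    and n: "of_int n * T0 \<le> s + t0" "u + t0 < of_int n * T0 + T0"
  shows "\<bar>g u - g s - (u - s)\<bar> < \<delta>"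
proof (rule ccontr)
  define F where "F v = g v - g s - (v - s)" for v
  have never: "\<bar>F v\<bar> \<noteq> \<delta>" if v: "v \<in> {s..u}" for v
  proof
    assume F: "\<bar>F v\<bar> = \<delta>"
    have s_in: "s \<in> {0..T1}" and v_in: "v \<in> {0..T1}" using v assms(2-4) by auto
    have "\<xi> (v + t0) = \<phi> (v - s) (\<xi> (s + t0))"
      using Pset_flow_within_period[OF fl xi n(1), of "v + t0"] n(2) v by simp
    moreover have "\<phi> (g v) y = \<phi> (g v - g s) (\<phi> (g s) y)"
      using topological_flow_add[OF fl, of "g v - g s" "g s" y] by simp
    ultimately have "dist (\<phi> (v - s) (\<xi> (s + t0))) (\<phi> (g v - g s) (\<phi> (g s) y)) < r"
      using close[OF v_in] by simp
    moreover have "g s \<le> g v" using Rep_continuous_mono(2)[OF g] v by (simp add: mono_def)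
    moreover have "v - s < T0" using v n by simp
    moreover have "g v - g s \<le> 2 * T0" using F \<open>v - s < T0\<close> \<open>\<delta> \<le> T0\<close> by (auto simp: F_def abs_eq_iff)
    ultimately have "\<bar>(v - s) - (g v - g s)\<bar> < \<delta>"
      using rigid[unfolded time_rigid_def, rule_format, of "\<xi> (s + t0)" "\<phi> (g s) y" "v - s" "g v - g s"]
        close[OF s_in] in_C[OF s_in] v \<open>0 < T0\<close> by simp
    then show False using F by (simp add: F_def abs_minus_commute)
  qed
  assume "\<not> \<bar>g u - g s - (u - s)\<bar> < \<delta>"
  then have "\<delta> \<le> F u \<or> F u \<le> -\<delta>" by (auto simp: F_def)
  moreover have "continuous_on {s..u} F"
    unfolding F_def using Rep_continuous_mono(1)[OF g]
    by (intro continuous_intros) (auto intro: continuous_on_subset)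
  moreover have "F s = 0" by (simp add: F_def)
  ultimately obtain v where "v \<in> {s..u}" "\<bar>F v\<bar> = \<delta>"
    using IVT'[of F s \<delta> u] IVT2'[of F u "-\<delta>" s] \<open>s \<le> u\<close> \<open>0 < \<delta>\<close> by force
  with never show False by blast
qed

lemma drift_within_window:
  assumes "\<delta> \<le> T0" "0 \<le> s" "s \<le> t" "t \<le> T1" "t - s \<le> T0"
  shows "\<bar>(g t - t) - (g s - s)\<bar> \<le> 2 * \<delta>"
proof -
  define n where "n = \<lfloor>(s + t0) / T0\<rfloor>"
  have "of_int n \<le> (s + t0) / T0" "(s + t0) / T0 < of_int n + 1"
    unfolding n_def by linarith+
  then have n: "of_int n * T0 \<le> s + t0" "s + t0 < of_int n * T0 + T0"
    using \<open>0 < T0\<close> by (simp_all add: field_simps)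
  show ?thesis
  proof (cases "t + t0 < of_int n * T0 + T0")
    case True
    then show ?thesis using drift_within_period[of s t n] assms n by simp
  next
    case False
    define m where "m = of_int n * T0 + T0 - t0"
    have m: "s < m" "m \<le> t" using n False by (auto simp: m_def)
    have "\<bar>g m - g s - (m - s)\<bar> \<le> \<delta>"
    proof (rule tendsto_le[of "at_left m" "\<lambda>_. \<delta>" \<delta>])
      have "(g \<longlongrightarrow> g m) (at_left m)"
        using Rep_continuous_mono(1)[OF g]
        by (simp add: continuous_on_eq_continuous_at isCont_def filterlim_at_split)
      then show "((\<lambda>u. \<bar>g u - g s - (u - s)\<bar>) \<longlongrightarrow> \<bar>g m - g s - (m - s)\<bar>) (at_left m)"
        by (intro tendsto_intros) (auto intro: tendsto_ident_at)
      have "\<bar>g u - g s - (u - s)\<bar> \<le> \<delta>" if "u \<in> {s<..<m}" for u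
        using drift_within_period[of s u n] that assms m n by (simp add: m_def less_imp_le)
      then show "\<forall>\<^sub>F u in at_left m. \<bar>g u - g s - (u - s)\<bar> \<le> \<delta>"
        using eventually_at_left_real[OF m(1)] by (simp add: eventually_mono)
    qed simp_all
    moreover have "\<bar>g t - g m - (t - m)\<bar> < \<delta>"
      using drift_within_period[of m t "n + 1"] assms m n \<open>0 < T0\<close> by (simp add: m_def algebra_simps)
    ultimately show ?thesis by linarith
  qed
qed

lemma Rep_eps_reparametrization:
  assumes "T0 \<le> T1" "4 * \<delta> < \<epsilon> * T0" "4 * \<delta> < T0"
  shows "\<exists>g'\<in>Rep_eps \<epsilon>. g' 0 = g 0 \<and> g' T1 = g T1 \<and> (\<forall>t\<in>{0..T1}. \<bar>g' t - g t\<bar> \<le> 2 * \<delta>)"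
proof (rule Rep_eps_approximation[where W = T0])
  fix s t assume "0 \<le> s" "s \<le> t" "t \<le> T1" "t - s \<le> T0"
  moreover have "\<delta> \<le> T0" using assms(3) \<open>0 < \<delta>\<close> by simp
  ultimately show "\<bar>(g t - t) - (g s - s)\<bar> \<le> 2 * \<delta>" using drift_within_window by blast
qed (use assms \<open>0 < \<delta>\<close> \<open>0 < T0\<close> in simp_all)

end

lemma Rep_eps_shadowing:
  fixes \<phi> :: "real \<Rightarrow> 'a::metric_space \<Rightarrow> 'a"
  assumes fl: "topological_flow \<phi>" and "compact (UNIV :: 'a set)" and "0 < T0" and "0 < \<epsilon>"
    and rigid: "\<forall>\<delta>>0. \<exists>r>0. time_rigid \<phi> C (2 * T0) \<delta> r"
  shows "\<exists>\<epsilon>1>0. \<forall>\<xi> t0 T1 g y. \<xi> \<in> Pset \<phi> T0 \<longrightarrow> T0 \<le> T1 \<longrightarrow> g \<in> Rep \<longrightarrow>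
           (\<forall>t\<in>{0..T1}. dist (\<xi> (t + t0)) (\<phi> (g t) y) < \<epsilon>1 \<and> \<xi> (t + t0) \<in> C \<and> \<phi> (g t) y \<in> C) \<longrightarrow>
           (\<exists>g'\<in>Rep_eps \<epsilon>. g' 0 = g 0 \<and> g' T1 = g T1 \<and>
              (\<forall>t\<in>{0..T1}. dist (\<xi> (t + t0)) (\<phi> (g' t) y) < \<epsilon>))"
proof -
  obtain \<sigma> where "0 < \<sigma>" and \<sigma>: "\<forall>s t x. \<bar>s - t\<bar> < \<sigma> \<longrightarrow> dist (\<phi> s x) (\<phi> t x) < \<epsilon> / 2"
    using flow_uniformly_continuous_in_time[OF fl assms(2), of "\<epsilon> / 2"] \<open>0 < \<epsilon>\<close> by auto
  define \<delta> where "\<delta> = min (T0 / 8) (min (\<epsilon> * T0 / 8) (\<sigma> / 4))"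
  have "\<delta> \<le> T0 / 8" "\<delta> \<le> \<epsilon> * T0 / 8" "\<delta> \<le> \<sigma> / 4" "0 < \<epsilon> * T0"
    using \<open>0 < \<epsilon>\<close> \<open>0 < T0\<close> by (simp_all add: \<delta>_def)
  moreover have "0 < \<delta>" using \<open>0 < \<epsilon>\<close> \<open>0 < \<sigma>\<close> \<open>0 < T0\<close> by (simp add: \<delta>_def)
  ultimately have \<delta>: "0 < \<delta>" "4 * \<delta> < \<epsilon> * T0" "4 * \<delta> < T0" "2 * \<delta> < \<sigma>"
    by linarith+
  obtain r where "0 < r" and rigid_r: "time_rigid \<phi> C (2 * T0) \<delta> r" using rigid \<delta>(1) by blast
  show ?thesis
  proof (intro exI[of _ "min r (\<epsilon> / 2)"] conjI allI impI)
    show "0 < min r (\<epsilon> / 2)" using \<open>0 < r\<close> \<open>0 < \<epsilon>\<close> by simp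
    fix \<xi> t0 T1 g y
    assume xi: "\<xi> \<in> Pset \<phi> T0" and T1: "T0 \<le> T1" and g: "g \<in> Rep" and
      "\<forall>t\<in>{0..T1}. dist (\<xi> (t + t0)) (\<phi> (g t) y) < min r (\<epsilon> / 2) \<and> \<xi> (t + t0) \<in> C \<and> \<phi> (g t) y \<in> C"
    then have close: "\<And>t. t \<in> {0..T1} \<Longrightarrow> dist (\<xi> (t + t0)) (\<phi> (g t) y) < min r (\<epsilon> / 2)"
      and in_C: "\<And>t. t \<in> {0..T1} \<Longrightarrow> \<xi> (t + t0) \<in> C \<and> \<phi> (g t) y \<in> C" by auto
    obtain g' where "g' \<in> Rep_eps \<epsilon>" "g' 0 = g 0" "g' T1 = g T1"
      and near: "\<And>t. t \<in> {0..T1} \<Longrightarrow> \<bar>g' t - g t\<bar> \<le> 2 * \<delta>"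
      using Rep_eps_reparametrization[OF fl xi \<open>0 < T0\<close> g close in_C
          time_rigid_antimono[OF rigid_r min.cobounded1] \<delta>(1) T1 \<delta>(2,3)] by blast
    moreover have "dist (\<xi> (t + t0)) (\<phi> (g' t) y) < \<epsilon>" if "t \<in> {0..T1}" for t
    proof -
      have "dist (\<phi> (g t) y) (\<phi> (g' t) y) < \<epsilon> / 2"
        using \<sigma> near[OF that] \<delta>(4) by (simp add: abs_minus_commute)
      moreover have "min r (\<epsilon> / 2) \<le> \<epsilon> / 2" by simp
      ultimately show ?thesis
        using close[OF that] dist_triangle[of "\<xi> (t + t0)" "\<phi> (g' t) y" "\<phi> (g t) y"] by linarith
    qed
    ultimately show "\<exists>g'\<in>Rep_eps \<epsilon>. g' 0 = g 0 \<and> g' T1 = g T1 \<and>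
        (\<forall>t\<in>{0..T1}. dist (\<xi> (t + t0)) (\<phi> (g' t) y) < \<epsilon>)" by blast
  qed
qed

theorem proposition2p1:
  fixes \<phi> :: "real \<Rightarrow> 'a::metric_space \<Rightarrow> 'a"
    and K :: "'a set" and T0 :: real
  assumes "topological_flow \<phi>"
    and "compact (UNIV :: 'a set)"
    and "compact K"
    and "K \<inter> Sing \<phi> = {}"
    and "0 < T0" and "T0 < 1"
    and "\<forall>t\<in>{0<..2*T0}. \<forall>x\<in>K. \<phi> t x \<noteq> x"
  shows "\<forall>\<epsilon>>0. \<exists>\<epsilon>1>0. \<forall>\<xi> t0 T1 g y.
           \<xi> \<in> Pset \<phi> T0 \<and> T1 \<ge> T0 \<and> g \<in> Rep \<and> g 0 = 0 \<and>
           (\<forall>t\<in>{0..T1}. dist (\<xi> (t + t0)) (\<phi> (g t) y) < \<epsilon>1 \<and>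
               \<xi> (t + t0) \<in> (\<Inter>s\<in>{-2*T0..2*T0}. \<phi> s ` K) \<and>
               \<phi> (g t) y \<in> (\<Inter>s\<in>{-2*T0..2*T0}. \<phi> s ` K))
           \<longrightarrow> (\<exists>g'. g' \<in> Rep_eps \<epsilon> \<and> g' 0 = g 0 \<and> g' T1 = g T1 \<and>
                 (\<forall>t\<in>{0..T1}. dist (\<xi> (t + t0)) (\<phi> (g' t) y) < \<epsilon>))"
proof -
  define C where "C = (\<Inter>s\<in>{-2*T0..2*T0}. \<phi> s ` K)"
  have "\<forall>\<delta>>0. \<exists>r>0. time_rigid \<phi> C (2 * T0) \<delta> r"
    unfolding C_def using assms(1)
    by (intro allI impI time_rigid_exists[OF assms(1-3) _ assms(7)])
      (auto intro: flow_mem_of_mem_Inter_image)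
  note shadowing = Rep_eps_shadowing[OF assms(1,2,5) _ this]
  show ?thesis
    unfolding C_def[symmetric]
    by (intro allI impI, drule shadowing, elim ex_forward conj_forward all_forward) (auto simp: Bex_def)
qed

end
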